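(* Let $\varphi$ be a concave Orlicz function satisfying $\lim_{t\to0^+}\sup_{u\in(0,1]}\varphi(tu)/\varphi(u)=0$. Then $\lambda_\varphi$ is lattice $1$-concave; indeed $\sum_{j=1}^J\lambda_\varphi(f_j)\le\lambda_\varphi(\sum_{j=1}^Jf_j)$ for every finite family $(f_j)_{j=1}^J$ in $[0,\infty]^{\mathbb{N}}$.
   Context: An Orlicz function is a non-null, left-continuous, non-decreasing $\varphi\colon[0,\infty)\to[0,\infty)$ with $\lim_{t\to0^+}\varphi(t)=0$; set $\varphi(\infty)=\infty$. For $f=(a_n)\in[0,\infty]^{\mathbb{N}}$, $\lambda_\varphi(f)=\inf\{t>0:\sum_{n=1}^\infty\varphi(a_n/t)\le1\}$; under the stated limit condition this is a function quasi-norm over $\mathbb{N}$ (counting measure). A function quasi-norm $\lambda$ over $\mathbb{N}$ is lattice $1$-concave if there is $C$ with $\sum_{j=1}^J\lambda(f_j)\le C\lambda(\sum_{j=1}^Jf_j)$ for all finite families of nonnegative sequences. *)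

theory Defs
  imports "HOL-Analysis.Analysis"
begin

definition orlicz_function :: "(real \<Rightarrow> real) \<Rightarrow> bool" where
  "orlicz_function \<phi> \<longleftrightarrow>
     (\<exists>t\<ge>0. \<phi> t \<noteq> 0) \<and>
     (\<forall>t\<ge>0. \<phi> t \<ge> 0) \<and>
     mono_on {0..} \<phi> \<and>
     (\<forall>t>0. continuous (at_left t) \<phi>) \<and>
     (\<phi> \<longlongrightarrow> 0) (at_right 0)"

definition phi_ext :: "(real \<Rightarrow> real) \<Rightarrow> ennreal \<Rightarrow> ennreal" where
  "phi_ext \<phi> x = (if x = \<infinity> then \<infinity> else ennreal (\<phi> (enn2real x)))"

text \<open>Luxemburg-type functional on sequences in [0,\<infinity>]^\<nat>
  (inf of the empty set is \<infinity>).\<close>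
definition lambda_phi :: "(real \<Rightarrow> real) \<Rightarrow> (nat \<Rightarrow> ennreal) \<Rightarrow> ennreal" where
  "lambda_phi \<phi> f =
     Inf (ennreal ` {t::real. t > 0 \<and> (\<Sum>n. phi_ext \<phi> (f n / ennreal t)) \<le> 1})"

definition lattice_1_concave :: "((nat \<Rightarrow> ennreal) \<Rightarrow> ennreal) \<Rightarrow> bool" where
  "lattice_1_concave L \<longleftrightarrow>
     (\<exists>C::real. \<forall>(J::nat) (f :: nat \<Rightarrow> nat \<Rightarrow> ennreal).
        (\<Sum>j<J. L (f j)) \<le> ennreal C * L (\<lambda>n. \<Sum>j<J. f j n))"

end

theory Submission
  imports Defs
begin

text \<open>If \<open>t < \<lambda>(f) + \<lambda>(g)\<close>, split \<open>t = s\<^sub>1 + s\<^sub>2\<close> with \<open>s\<^sub>1 < \<lambda>(f)\<close> and \<open>s\<^sub>2 < \<lambda>(g)\<close>,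
  so that the modulars \<open>\<rho>(f/s\<^sub>1)\<close> and \<open>\<rho>(g/s\<^sub>2)\<close> both exceed 1. Concavity of \<open>\<phi>\<close> makes its
  perspective \<open>(x, s) \<mapsto> s \<phi>(x/s)\<close> superadditive, so pointwise
  \<open>t \<phi>((f + g)/t) \<ge> s\<^sub>1 \<phi>(f/s\<^sub>1) + s\<^sub>2 \<phi>(g/s\<^sub>2)\<close>; summing gives \<open>t \<rho>((f + g)/t) > t\<close>,
  hence \<open>t \<le> \<lambda>(f + g)\<close>. Thus \<open>\<lambda>\<close> is superadditive, which is lattice 1-concavity with
  constant 1.\<close>

definition orlicz_modular :: "(real \<Rightarrow> real) \<Rightarrow> (nat \<Rightarrow> ennreal) \<Rightarrow> ennreal" where
  "orlicz_modular \<phi> f = (\<Sum>n. phi_ext \<phi> (f n))"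

lemma lambda_phi_eq_Inf_modular:
  "lambda_phi \<phi> f = Inf (ennreal ` {t. t > 0 \<and> orlicz_modular \<phi> (\<lambda>n. f n / ennreal t) \<le> 1})"
  by (simp add: lambda_phi_def orlicz_modular_def)

lemma lambda_phi_le:
  assumes "t > 0" "orlicz_modular \<phi> (\<lambda>n. f n / ennreal t) \<le> 1"
  shows "lambda_phi \<phi> f \<le> ennreal t"
  unfolding lambda_phi_eq_Inf_modular using assms by (intro Inf_lower) auto

lemma orlicz_modular_gt_one_below_lambda_phi:
  assumes "t > 0" "ennreal t < lambda_phi \<phi> f"
  shows "orlicz_modular \<phi> (\<lambda>n. f n / ennreal t) > 1"
  using lambda_phi_le[of t \<phi> f] assms by (meson leD not_le_imp_less)

lemma lambda_phi_geI:
  assumes "\<And>t. t > 0 \<Longrightarrow> ennreal t < c \<Longrightarrow> orlicz_modular \<phi> (\<lambda>n. f n / ennreal t) > 1"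
  shows "c \<le> lambda_phi \<phi> f"
  unfolding lambda_phi_eq_Inf_modular
proof (rule Inf_greatest)
  fix x assume "x \<in> ennreal ` {t. t > 0 \<and> orlicz_modular \<phi> (\<lambda>n. f n / ennreal t) \<le> 1}"
  then obtain t where "t > 0" "orlicz_modular \<phi> (\<lambda>n. f n / ennreal t) \<le> 1" "x = ennreal t"
    by auto
  with assms show "c \<le> x" by (meson leD not_le_imp_less)
qed

lemma phi_ext_mono:
  assumes "mono_on {0..} \<phi>" "x \<le> y"
  shows "phi_ext \<phi> x \<le> phi_ext \<phi> y"
proof (cases "y = \<infinity>")
  case False
  then have "x \<noteq> \<infinity>" "enn2real x \<le> enn2real y"
    using assms(2) by (auto simp: top_unique enn2real_mono less_top)
  with False show ?thesis
    by (auto simp: phi_ext_def intro!: ennreal_leI mono_onD[OF assms(1)])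
qed (simp add: phi_ext_def)

lemma lambda_phi_mono:
  assumes "mono_on {0..} \<phi>" "\<And>n. f n \<le> g n"
  shows "lambda_phi \<phi> f \<le> lambda_phi \<phi> g"
  unfolding lambda_phi_eq_Inf_modular
proof (rule Inf_superset_mono, clarsimp)
  fix t :: real
  assume "t > 0" "orlicz_modular \<phi> (\<lambda>n. g n / ennreal t) \<le> 1"
  moreover have "orlicz_modular \<phi> (\<lambda>n. f n / ennreal t) \<le> orlicz_modular \<phi> (\<lambda>n. g n / ennreal t)"
    unfolding orlicz_modular_def
    using assms by (intro suminf_le phi_ext_mono divide_right_mono_ennreal) auto
  ultimately show "ennreal t \<in> ennreal ` {t. t > 0 \<and> orlicz_modular \<phi> (\<lambda>n. f n / ennreal t) \<le> 1}"
    by auto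
qed

lemma split_below_sum:
  fixes A B t :: real
  assumes "A > 0" "B > 0" "t > 0" "t < A + B"
  shows "\<exists>t1 t2. t1 > 0 \<and> t2 > 0 \<and> t1 + t2 = t \<and> t1 < A \<and> t2 < B"
proof -
  have "t * A / (A + B) + t * B / (A + B) = t"
    using assms by (simp add: add_divide_distrib[symmetric] distrib_left[symmetric])
  moreover have "t * A / (A + B) < A" "t * B / (A + B) < B"
    using assms by (simp_all add: pos_divide_less_eq)
  ultimately show ?thesis
    using assms by (intro exI[of _ "t * A / (A + B)"] exI[of _ "t * B / (A + B)"]) simp
qed

lemma ennreal_split_below_sum:
  fixes a b :: ennreal and t :: real
  assumes "a > 0" "b > 0" "t > 0" "ennreal t < a + b"
  shows "\<exists>t1 t2. t1 > 0 \<and> t2 > 0 \<and> t1 + t2 = t \<and> ennreal t1 < a \<and> ennreal t2 < b"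
proof -
  define A where "A = enn2real (min a (ennreal t))"
  define B where "B = enn2real (min b (ennreal t))"
  have A: "ennreal A = min a (ennreal t)" and B: "ennreal B = min b (ennreal t)"
    by (auto simp: A_def B_def min_def ennreal_enn2real_if top_unique)
  have "ennreal t < ennreal A + ennreal B"
    unfolding A B using assms
    by (cases "a \<le> ennreal t"; cases "b \<le> ennreal t")
       (auto simp: min_def ennreal_add_left_cancel_less not_le
             intro: ennreal_add_left_cancel_less[THEN iffD2])
  moreover have "A > 0" "B > 0"
    using A B assms by (auto simp: A_def B_def enn2real_positive_iff min_less_iff_disj)
  ultimately have "t < A + B"
    using \<open>t > 0\<close> by (simp add: ennreal_plus[symmetric] ennreal_less_iff del: ennreal_plus)
  with \<open>A > 0\<close> \<open>B > 0\<close> obtain t1 t2 where "t1 > 0" "t2 > 0" "t1 + t2 = t" "t1 < A" "t2 < B"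
    using split_below_sum \<open>t > 0\<close> by blast
  moreover have "ennreal t1 < ennreal A" "ennreal t2 < ennreal B"
    using \<open>t1 < A\<close> \<open>t2 < B\<close> \<open>A > 0\<close> \<open>B > 0\<close> by (simp_all add: ennreal_lessI)
  moreover have "ennreal A \<le> a" "ennreal B \<le> b"
    using A B by simp_all
  ultimately show ?thesis by (blast intro: order_less_le_trans)
qed

lemma concave_on_perspective_superadditive:
  fixes \<phi> :: "real \<Rightarrow> real"
  assumes "concave_on {0..} \<phi>" "x \<ge> 0" "y \<ge> 0" "s > 0" "t > 0"
  shows "s * \<phi> (x / s) + t * \<phi> (y / t) \<le> (s + t) * \<phi> ((x + y) / (s + t))"
proof -
  have weight: "1 - t / (s + t) = s / (s + t)"
    using assms by (simp add: field_simps)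
  have "s / (s + t) * \<phi> (x / s) + t / (s + t) * \<phi> (y / t)
          \<le> \<phi> ((s / (s + t)) *\<^sub>R (x / s) + (t / (s + t)) *\<^sub>R (y / t))"
    using concave_onD[OF assms(1), of "t / (s + t)" "x / s" "y / t"] assms unfolding weight by auto
  also have "(s / (s + t)) *\<^sub>R (x / s) + (t / (s + t)) *\<^sub>R (y / t) = (x + y) / (s + t)"
    using assms by (simp add: add_divide_distrib)
  finally have mixture: "s / (s + t) * \<phi> (x / s) + t / (s + t) * \<phi> (y / t) \<le> \<phi> ((x + y) / (s + t))" .
  have "s * \<phi> (x / s) + t * \<phi> (y / t) = (s + t) * (s / (s + t) * \<phi> (x / s) + t / (s + t) * \<phi> (y / t))"
    using assms by (simp add: distrib_left)
  also have "\<dots> \<le> (s + t) * \<phi> ((x + y) / (s + t))"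
    using mixture assms by (intro mult_left_mono) auto
  finally show ?thesis .
qed

lemma phi_ext_perspective_superadditive:
  assumes nonneg: "\<And>t. t \<ge> 0 \<Longrightarrow> \<phi> t \<ge> 0" and concave: "concave_on {0..} \<phi>"
    and "s > 0" "t > 0"
  shows "ennreal s * phi_ext \<phi> (x / ennreal s) + ennreal t * phi_ext \<phi> (y / ennreal t)
           \<le> ennreal (s + t) * phi_ext \<phi> ((x + y) / ennreal (s + t))"
proof (cases "x = \<infinity> \<or> y = \<infinity>")
  case True
  then have "phi_ext \<phi> ((x + y) / ennreal (s + t)) = \<infinity>"
    by (auto simp: phi_ext_def ennreal_top_divide)
  then show ?thesis
    using \<open>s > 0\<close> \<open>t > 0\<close> by (simp add: ennreal_mult_top)
next
  case False
  then obtain X Y where X: "x = ennreal X" "X \<ge> 0" and Y: "y = ennreal Y" "Y \<ge> 0"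
    by (cases x; cases y) auto
  have phi_ext_real: "phi_ext \<phi> (ennreal z / ennreal r) = ennreal (\<phi> (z / r))" if "z \<ge> 0" "r > 0" for z r
    using that by (simp add: phi_ext_def divide_ennreal)
  have "x + y = ennreal (X + Y)"
    using X Y by simp
  have "0 \<le> \<phi> (X / s)" "0 \<le> \<phi> (Y / t)" "0 \<le> \<phi> ((X + Y) / (s + t))"
    using X Y \<open>s > 0\<close> \<open>t > 0\<close> nonneg by simp_all
  then have "ennreal s * phi_ext \<phi> (x / ennreal s) + ennreal t * phi_ext \<phi> (y / ennreal t)
               = ennreal (s * \<phi> (X / s) + t * \<phi> (Y / t))"
    using X Y \<open>s > 0\<close> \<open>t > 0\<close> by (simp add: phi_ext_real ennreal_mult)
  also have "\<dots> \<le> ennreal ((s + t) * \<phi> ((X + Y) / (s + t)))"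
    using concave_on_perspective_superadditive[OF concave X(2) Y(2) \<open>s > 0\<close> \<open>t > 0\<close>]
    by (rule ennreal_leI)
  also have "\<dots> = ennreal (s + t) * phi_ext \<phi> ((x + y) / ennreal (s + t))"
    using \<open>x + y = ennreal (X + Y)\<close> \<open>0 \<le> \<phi> ((X + Y) / (s + t))\<close> X Y \<open>s > 0\<close> \<open>t > 0\<close>
    by (simp add: phi_ext_real ennreal_mult del: ennreal_plus)
  finally show ?thesis .
qed

lemma lambda_phi_superadditive:
  assumes nonneg: "\<And>t. t \<ge> 0 \<Longrightarrow> \<phi> t \<ge> 0" and mono: "mono_on {0..} \<phi>"
    and concave: "concave_on {0..} \<phi>"
  shows "lambda_phi \<phi> f + lambda_phi \<phi> g \<le> lambda_phi \<phi> (\<lambda>n. f n + g n)"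
proof (cases "lambda_phi \<phi> f = 0 \<or> lambda_phi \<phi> g = 0")
  case True
  then show ?thesis
    using lambda_phi_mono[OF mono, of f "\<lambda>n. f n + g n"] lambda_phi_mono[OF mono, of g "\<lambda>n. f n + g n"]
    by (auto simp: add_increasing add_increasing2)
next
  case False
  show ?thesis
  proof (rule lambda_phi_geI)
    fix t :: real
    assume "t > 0" "ennreal t < lambda_phi \<phi> f + lambda_phi \<phi> g"
    with False obtain s1 s2 where s: "s1 > 0" "s2 > 0" "s1 + s2 = t"
      and "ennreal s1 < lambda_phi \<phi> f" "ennreal s2 < lambda_phi \<phi> g"
      using ennreal_split_below_sum by (metis not_gr_zero)
    then have "1 < orlicz_modular \<phi> (\<lambda>n. f n / ennreal s1)" "1 < orlicz_modular \<phi> (\<lambda>n. g n / ennreal s2)"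
      by (simp_all add: orlicz_modular_gt_one_below_lambda_phi)
    then have "ennreal s1 * 1 + ennreal s2 * 1
        < ennreal s1 * orlicz_modular \<phi> (\<lambda>n. f n / ennreal s1) + ennreal s2 * orlicz_modular \<phi> (\<lambda>n. g n / ennreal s2)"
      using s by (intro add_strict_mono ennreal_mult_strict_left_mono) auto
    also have "\<dots> = (\<Sum>n. ennreal s1 * phi_ext \<phi> (f n / ennreal s1) + ennreal s2 * phi_ext \<phi> (g n / ennreal s2))"
      by (simp add: orlicz_modular_def suminf_add[symmetric] summableI)
    also have "\<dots> \<le> (\<Sum>n. ennreal t * phi_ext \<phi> ((f n + g n) / ennreal t))"
      unfolding s(3)[symmetric]
      by (intro suminf_le phi_ext_perspective_superadditive[OF nonneg concave s(1,2)]) (auto intro: summableI)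
    also have "\<dots> = ennreal t * orlicz_modular \<phi> (\<lambda>n. (f n + g n) / ennreal t)"
      by (simp add: orlicz_modular_def)
    finally have "ennreal t * 1 < ennreal t * orlicz_modular \<phi> (\<lambda>n. (f n + g n) / ennreal t)"
      using s by (simp add: ennreal_plus[symmetric] del: ennreal_plus)
    then show "1 < orlicz_modular \<phi> (\<lambda>n. (f n + g n) / ennreal t)"
      by (meson leI mult_left_mono not_less zero_le)
  qed
qed

lemma lambda_phi_sum_superadditive:
  assumes "\<And>t. t \<ge> 0 \<Longrightarrow> \<phi> t \<ge> 0" "mono_on {0..} \<phi>" "concave_on {0..} \<phi>"
  shows "(\<Sum>j\<in>I. lambda_phi \<phi> (f j)) \<le> lambda_phi \<phi> (\<lambda>n. \<Sum>j\<in>I. f j n)"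
proof (induction I rule: infinite_finite_induct)
  case (insert j I)
  then have "(\<Sum>j\<in>insert j I. lambda_phi \<phi> (f j)) \<le> lambda_phi \<phi> (f j) + lambda_phi \<phi> (\<lambda>n. \<Sum>j\<in>I. f j n)"
    by (simp add: add_left_mono)
  also have "\<dots> \<le> lambda_phi \<phi> (\<lambda>n. \<Sum>j\<in>insert j I. f j n)"
    using insert lambda_phi_superadditive[OF assms] by simp
  finally show ?case .
qed simp_all

theorem proposition4p16:
  fixes \<phi> :: "real \<Rightarrow> real"
  assumes "orlicz_function \<phi>"
    and "concave_on {0..} \<phi>"
    and "((\<lambda>t. SUP u\<in>{0<..1}. \<phi> (t * u) / \<phi> u) \<longlongrightarrow> 0) (at_right 0)"
  shows "lattice_1_concave (lambda_phi \<phi>) \<and>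
         (\<forall>(J::nat) (f :: nat \<Rightarrow> nat \<Rightarrow> ennreal).
            (\<Sum>j<J. lambda_phi \<phi> (f j)) \<le> lambda_phi \<phi> (\<lambda>n. \<Sum>j<J. f j n))"
proof -
  have "\<And>t. t \<ge> 0 \<Longrightarrow> \<phi> t \<ge> 0" "mono_on {0..} \<phi>"
    using assms(1) unfolding orlicz_function_def by auto
  then have superadditive:
    "(\<Sum>j<J. lambda_phi \<phi> (f j)) \<le> lambda_phi \<phi> (\<lambda>n. \<Sum>j<J. f j n)" for J :: nat and f
    using lambda_phi_sum_superadditive assms(2) by blast
  then have "lattice_1_concave (lambda_phi \<phi>)"
    unfolding lattice_1_concave_def by (intro exI[of _ 1]) simp
  with superadditive show ?thesis by blast
qed

end
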